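(* Let $R$ be a commutative ring with identity, $n>1$, $S=M_n(R)$. Let $A_1,A_2$ be vertices of the orthogonality graph $O(S)$, and let $c_1,c_2\in R$ be nonzero elements with $c_i\det A_i=0$ ($i=1,2$) and $c_1c_2=0$. Then $d(A_1,A_2)\le 3$.
   Context: The orthogonality graph $O(S)$ of a ring $S$ is the undirected graph whose vertices are the nonzero two-sided zero-divisors of $S$, distinct vertices $x,y$ being adjacent iff $xy=yx=0$; $d$ is the graph distance. *)

theory Defs
  imports "HOL-Analysis.Analysis" "HOL-Library.Extended_Nat"
begin

definition two_sided_zd :: "'a::comm_ring_1^'n^'n \<Rightarrow> bool" where
  "two_sided_zd x \<longleftrightarrow> (\<exists>y::'a^'n^'n. y \<noteq> 0 \<and> x ** y = 0) \<and> (\<exists>z::'a^'n^'n. z \<noteq> 0 \<and> z ** x = 0)"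

definition orth_vertex :: "'a::comm_ring_1^'n^'n \<Rightarrow> bool" where
  "orth_vertex x \<longleftrightarrow> x \<noteq> 0 \<and> two_sided_zd x"

definition orth_adj :: "'a::comm_ring_1^'n^'n \<Rightarrow> 'a^'n^'n \<Rightarrow> bool" where
  "orth_adj x y \<longleftrightarrow> orth_vertex x \<and> orth_vertex y \<and> x \<noteq> y \<and> x ** y = 0 \<and> y ** x = 0"

text \<open>Walks and graph distance (infinite if no walk exists).\<close>
definition walk :: "('v \<Rightarrow> 'v \<Rightarrow> bool) \<Rightarrow> 'v list \<Rightarrow> bool" where
  "walk E xs \<longleftrightarrow> xs \<noteq> [] \<and> (\<forall>i. Suc i < length xs \<longrightarrow> E (xs ! i) (xs ! Suc i))"

definition graph_dist :: "('v \<Rightarrow> 'v \<Rightarrow> bool) \<Rightarrow> 'v \<Rightarrow> 'v \<Rightarrow> enat" where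
  "graph_dist E x y = (INF xs \<in> {xs. walk E xs \<and> hd xs = x \<and> last xs = y}. enat (length xs - 1))"

end

theory Submission
  imports Defs
begin

text \<open>
  A McCoy-type argument: if \<open>c \<noteq> 0\<close> and \<open>c * det A = 0\<close>, then \<open>A\<close> has a nonzero two-sided
  annihilator \<open>B\<close> with all entries in \<open>cR\<close>. Among the matrices whose columns are columns of
  \<open>A\<close> or unit vectors and whose determinant is not killed by \<open>c\<close> (the identity is one), take
  one with the most columns from \<open>A\<close>; it cannot consist of columns of \<open>A\<close> only. Trading one
  unit-vector column for an unused column of \<open>A\<close> gives a matrix \<open>N\<close> such that \<open>c\<close> kills the
  determinant of every matrix obtained from \<open>N\<close> by replacing one column with a column of the
  same kind. By Cramer's rule \<open>c\<close> then kills the relevant entries of \<open>adj N \<cdot> A\<close> and of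
  \<open>N \<cdot> adj N = det N \<cdot> I\<close>, and \<open>c\<close> times the rows of \<open>adj N\<close> moved to the positions of the
  corresponding columns of \<open>A\<close> annihilates \<open>A\<close> on both sides, while the entry coming from the
  traded column is \<open>c\<close> times the determinant of the maximal matrix.

  Applied to \<open>A\<^sub>1\<close> and \<open>A\<^sub>2\<close> this yields \<open>B\<^sub>1\<close>, \<open>B\<^sub>2\<close> with entries in \<open>c\<^sub>1R\<close> and
  \<open>c\<^sub>2R\<close>, so \<open>B\<^sub>1B\<^sub>2 = B\<^sub>2B\<^sub>1 = 0\<close> as \<open>c\<^sub>1c\<^sub>2 = 0\<close>, and \<open>A\<^sub>1, B\<^sub>1, B\<^sub>2, A\<^sub>2\<close> is a walk
  of length at most 3 once repeated vertices are skipped.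
\<close>

definition replace_row :: "'a^'n^'m \<Rightarrow> 'm \<Rightarrow> 'a^'n \<Rightarrow> 'a^'n^'m" where
  "replace_row N p w = (\<chi> r. if r = p then w else N $ r)"

definition replace_column :: "'a^'n^'m \<Rightarrow> 'n \<Rightarrow> 'a^'m \<Rightarrow> 'a^'n^'m" where
  "replace_column N j v = (\<chi> r i. if i = j then v $ r else N $ r $ i)"

definition adjugate :: "'a::comm_ring_1^'n::finite^'n \<Rightarrow> 'a^'n^'n" where
  "adjugate N = (\<chi> i p. det (replace_column N i (axis p 1)))"

lemma transpose_replace_row: "transpose (replace_row N p w) = replace_column (transpose N) p w"
  by (simp add: replace_column_def replace_row_def transpose_def vec_eq_iff)

lemma sum_axis_expansion: "(\<Sum>a\<in>UNIV. v $ a *s axis a 1) = (v :: 'a::comm_ring_1^'n::finite)"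
  by (simp add: vec_eq_iff axis_def sum_component if_distrib cong: if_cong)

lemma det_replace_row_expansion:
  fixes N :: "'a::comm_ring_1^'n::finite^'n"
  shows "det (replace_row N p v) = (\<Sum>j\<in>UNIV. v $ j * det (replace_row N p (axis j 1)))"
proof -
  have "det (replace_row N p v) = det (replace_row N p (\<Sum>j\<in>UNIV. v $ j *s axis j 1))"
    by (simp add: sum_axis_expansion)
  also have "\<dots> = (\<Sum>j\<in>UNIV. det (\<chi> r. if r = p then v $ j *s axis j 1 else N $ r))"
    unfolding replace_row_def by (rule det_linear_row_sum) simp
  also have "\<dots> = (\<Sum>j\<in>UNIV. v $ j * det (replace_row N p (axis j 1)))"
    unfolding replace_row_def by (simp add: det_row_mul)
  finally show ?thesis .
qed

lemma det_replace_column_expansion: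
  fixes N :: "'a::comm_ring_1^'n::finite^'n"
  shows "det (replace_column N i v) = (\<Sum>p\<in>UNIV. v $ p * det (replace_column N i (axis p 1)))"
  using det_replace_row_expansion[of "transpose N" i v]
  by (metis (no_types, lifting) det_transpose transpose_replace_row transpose_transpose sum.cong)

lemma adjugate_mult_vector: "(adjugate N *v v) $ i = det (replace_column N i v)"
  by (simp add: matrix_vector_mult_def adjugate_def det_replace_column_expansion[of N i v]
      mult.commute)

lemma det_replace_column_axis:
  fixes N :: "'a::comm_ring_1^'n::finite^'n"
  shows "det (replace_column N j (axis p 1)) = det (replace_row N p (axis j 1))"
  unfolding det_def
proof (rule sum.cong[OF refl])
  fix s assume "s \<in> {s. s permutes (UNIV::'n set)}"
  then have s: "s permutes (UNIV::'n set)" by simp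
  have "(\<Prod>i\<in>UNIV. replace_column N j (axis p 1) $ i $ s i)
      = (\<Prod>i\<in>UNIV. replace_row N p (axis j 1) $ i $ s i)"
  proof (cases "s p = j")
    case True
    then show ?thesis
      using permutes_inj[OF s]
      by (intro prod.cong) (auto simp: replace_column_def replace_row_def axis_def dest: injD)
  next
    case False
    obtain i0 where i0: "s i0 = j" using permutes_surj[OF s] by (metis surjD)
    then have "(\<Prod>i\<in>UNIV. replace_column N j (axis p 1) $ i $ s i) = 0"
      using False by (intro prod_zero bexI[of _ i0]) (auto simp: replace_column_def axis_def)
    moreover have "(\<Prod>i\<in>UNIV. replace_row N p (axis j 1) $ i $ s i) = 0"
      using False by (intro prod_zero bexI[of _ p]) (auto simp: replace_row_def axis_def)
    ultimately show ?thesis by simp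
  qed
  then show "of_int (sign s) * (\<Prod>i\<in>UNIV. replace_column N j (axis p 1) $ i $ s i) =
        of_int (sign s) * (\<Prod>i\<in>UNIV. replace_row N p (axis j 1) $ i $ s i)" by simp
qed

lemma adjugate_transpose: "adjugate (transpose N) = transpose (adjugate N)"
proof -
  have "det (replace_column (transpose N) i (axis p 1)) = det (replace_column N p (axis i 1))" for i p
    by (metis det_replace_column_axis det_transpose transpose_replace_row transpose_transpose)
  then show ?thesis by (simp add: vec_eq_iff adjugate_def transpose_def)
qed

lemma adjugate_mult: "adjugate N ** N = mat (det N)"
proof -
  have "det (replace_column N i (column k N)) = (if i = k then det N else 0)" for i k
  proof (cases "i = k")
    case True
    then have "replace_column N i (column k N) = N"
      by (simp add: replace_column_def column_def vec_eq_iff)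
    then show ?thesis using True by simp
  next
    case False
    then show ?thesis
      by (simp add: det_identical_columns[of i k] replace_column_def column_def)
  qed
  then show ?thesis
    using adjugate_mult_vector[of N "column _ N"]
    by (simp add: vec_eq_iff mat_def matrix_matrix_mult_def matrix_vector_mult_def column_def)
qed

lemma mult_adjugate: "N ** adjugate N = mat (det N)"
proof -
  have "transpose (N ** adjugate N) = adjugate (transpose N) ** transpose N"
    by (simp add: matrix_transpose_mul adjugate_transpose)
  also have "\<dots> = mat (det N)" by (simp add: adjugate_mult)
  finally show ?thesis by (metis transpose_mat transpose_transpose)
qed

lemma adjugate_mult_column:
  "(adjugate N ** A) $ i $ k = det (replace_column N i (column k A))"
  using adjugate_mult_vector[of N "column k A" i]
  by (simp add: matrix_matrix_mult_def matrix_vector_mult_def column_def)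

definition mixed_columns :: "'a::{zero,one}^'k^'m \<Rightarrow> ('n \<Rightarrow> 'k + 'm) \<Rightarrow> 'a^'n^'m" where
  "mixed_columns A g = (\<chi> r i. case g i of Inl a \<Rightarrow> A $ r $ a | Inr q \<Rightarrow> axis q 1 $ r)"

lemma mixed_columns_nth:
  "mixed_columns A g $ r $ i = (case g i of Inl a \<Rightarrow> A $ r $ a | Inr q \<Rightarrow> axis q 1 $ r)"
  by (simp add: mixed_columns_def)

definition inl_count :: "('n::finite \<Rightarrow> 'k + 'm) \<Rightarrow> nat" where
  "inl_count g = card {i. isl (g i)}"

lemma replace_column_mixed_columns_Inl:
  "replace_column (mixed_columns A g) i (column k A) = mixed_columns A (g(i := Inl k))"
  by (simp add: replace_column_def mixed_columns_def column_def vec_eq_iff)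

lemma replace_column_mixed_columns_Inr:
  "replace_column (mixed_columns A g) i (axis p 1) = mixed_columns A (g(i := Inr p))"
  by (simp add: replace_column_def mixed_columns_def vec_eq_iff)

lemma mixed_columns_Inr: "mixed_columns A Inr = mat 1"
  by (simp add: mixed_columns_def mat_def axis_def vec_eq_iff)

lemma inl_count_le_card: "inl_count g \<le> CARD('n)" for g :: "'n::finite \<Rightarrow> 'k + 'm"
  unfolding inl_count_def by (rule card_mono) auto

lemma inl_count_fun_upd:
  assumes "isl v = isl (g i)"
  shows "inl_count (g(i := v)) = inl_count g"
  using assms unfolding inl_count_def by (metis fun_upd_apply)

lemma det_dvd_det_mixed_columns:
  fixes A :: "'a::comm_ring_1^'n::finite^'n"
  assumes "\<And>i. isl (g i)"
  shows "det A dvd det (mixed_columns A g)"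
proof -
  define h where "h i = projl (g i)" for i
  have mixed: "mixed_columns A g = (\<chi> r i. A $ r $ h i)"
    using assms by (simp add: mixed_columns_def h_def vec_eq_iff sum.case_eq_if)
  show ?thesis
  proof (cases "inj h")
    case True
    then have "h permutes UNIV" by (intro inj_imp_permutes) auto
    then show ?thesis by (simp add: mixed det_permute_columns)
  next
    case False
    then obtain j k where "j \<noteq> k" "h j = h k" unfolding inj_def by auto
    then have "det (\<chi> r i. A $ r $ h i) = 0"
      by (intro det_identical_columns[of j k]) (simp_all add: column_def vec_eq_iff)
    then show ?thesis by (simp add: mixed)
  qed
qed

lemma sum_Inl_fibres:
  fixes g :: "'n::finite \<Rightarrow> 'k::finite + 'm"
  shows "(\<Sum>a\<in>UNIV. \<Sum>i | g i = Inl a. f a i)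
    = (\<Sum>i\<in>UNIV. case g i of Inl a \<Rightarrow> f a i | Inr _ \<Rightarrow> 0)"
proof -
  have "(\<Sum>a\<in>UNIV. \<Sum>i | g i = Inl a. f a i) = (\<Sum>a\<in>UNIV. \<Sum>i\<in>UNIV. if g i = Inl a then f a i else 0)"
    by (simp add: sum.If_cases Collect_conv_if)
  also have "\<dots> = (\<Sum>i\<in>UNIV. \<Sum>a\<in>UNIV. if g i = Inl a then f a i else 0)"
    by (rule sum.swap)
  also have "\<dots> = (\<Sum>i\<in>UNIV. case g i of Inl a \<Rightarrow> f a i | Inr _ \<Rightarrow> 0)"
    by (intro sum.cong refl) (simp split: sum.split)
  finally show ?thesis .
qed

text \<open>For \<open>N = mixed_columns A g\<close> this is \<open>c \<cdot> P \<cdot> adj N\<close>, where \<open>P\<close> sends row \<open>i\<close> of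
  \<open>adj N\<close> to row \<open>a\<close> whenever column \<open>i\<close> of \<open>N\<close> is column \<open>a\<close> of \<open>A\<close>.\<close>

definition mccoy_annihilator ::
    "'a::comm_ring_1 \<Rightarrow> 'a^'n^'n \<Rightarrow> ('n::finite \<Rightarrow> 'n + 'n) \<Rightarrow> 'a^'n^'n" where
  "mccoy_annihilator c A g =
     (\<chi> a p. c * (\<Sum>i | g i = Inl a. adjugate (mixed_columns A g) $ i $ p))"

context
  fixes A :: "'a::comm_ring_1^'n::finite^'n" and c :: 'a and g :: "'n \<Rightarrow> 'n + 'n"
  assumes saturated: "\<And>g'. inl_count g' = inl_count g \<Longrightarrow> c * det (mixed_columns A g') = 0"
begin

lemma mccoy_annihilator_mult: "mccoy_annihilator c A g ** A = 0"
proof -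
  let ?N = "mixed_columns A g"
  have killed: "c * (adjugate ?N ** A) $ i $ k = 0" if "g i = Inl a" for i a k
    using that saturated[of "g(i := Inl k)"]
    by (simp add: adjugate_mult_column replace_column_mixed_columns_Inl inl_count_fun_upd)
  have "(mccoy_annihilator c A g ** A) $ a $ k = 0" for a k
  proof -
    have "(mccoy_annihilator c A g ** A) $ a $ k
        = (\<Sum>p\<in>UNIV. c * (\<Sum>i | g i = Inl a. adjugate ?N $ i $ p) * A $ p $ k)"
      unfolding mccoy_annihilator_def matrix_matrix_mult_def by simp
    also have "\<dots> = (\<Sum>p\<in>UNIV. \<Sum>i | g i = Inl a. c * (adjugate ?N $ i $ p * A $ p $ k))"
      by (simp only: sum_distrib_left sum_distrib_right mult.assoc)
    also have "\<dots> = (\<Sum>i | g i = Inl a. c * (adjugate ?N ** A) $ i $ k)"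
      by (subst sum.swap) (simp only: matrix_matrix_mult_def vec_lambda_beta sum_distrib_left)
    also have "\<dots> = 0" using killed by (intro sum.neutral) auto
    finally show ?thesis .
  qed
  then show ?thesis by (simp add: vec_eq_iff)
qed

lemma mult_mccoy_annihilator: "A ** mccoy_annihilator c A g = 0"
proof -
  let ?N = "mixed_columns A g"
  have killed: "c * adjugate ?N $ i $ p = 0" if "g i = Inr q" for i q p
    using that saturated[of "g(i := Inr p)"]
    by (simp add: adjugate_def replace_column_mixed_columns_Inr inl_count_fun_upd)
  have "(A ** mccoy_annihilator c A g) $ r $ p = 0" for r p
  proof -
    have "(A ** mccoy_annihilator c A g) $ r $ p
        = (\<Sum>a\<in>UNIV. A $ r $ a * (c * (\<Sum>i | g i = Inl a. adjugate ?N $ i $ p)))"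
      unfolding mccoy_annihilator_def matrix_matrix_mult_def by simp
    also have "\<dots> = (\<Sum>a\<in>UNIV. \<Sum>i | g i = Inl a. A $ r $ a * (c * adjugate ?N $ i $ p))"
      by (simp only: sum_distrib_left)
    also have "\<dots> = (\<Sum>i\<in>UNIV. ?N $ r $ i * (c * adjugate ?N $ i $ p))"
      unfolding sum_Inl_fibres
    proof (intro sum.cong refl)
      fix i
      show "(case g i of Inl a \<Rightarrow> A $ r $ a * (c * adjugate ?N $ i $ p) | Inr _ \<Rightarrow> 0)
          = ?N $ r $ i * (c * adjugate ?N $ i $ p)"
        using killed by (cases "g i") (simp_all add: mixed_columns_nth)
    qed
    also have "\<dots> = c * (\<Sum>i\<in>UNIV. ?N $ r $ i * adjugate ?N $ i $ p)"
      by (simp add: sum_distrib_left mult.left_commute)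
    also have "\<dots> = c * (?N ** adjugate ?N) $ r $ p"
      by (simp add: matrix_matrix_mult_def)
    also have "\<dots> = 0"
      using saturated[of g] by (simp add: mult_adjugate mat_def)
    finally show ?thesis .
  qed
  then show ?thesis by (simp add: vec_eq_iff)
qed

end

lemma mccoy_annihilator_entry:
  assumes "g q = Inl s" and "\<And>i. g i = Inl s \<Longrightarrow> i = q"
  shows "mccoy_annihilator c A g $ s $ p = c * det (mixed_columns A (g(q := Inr p)))"
proof -
  have "{i. g i = Inl s} = {q}" using assms by blast
  then have "mccoy_annihilator c A g $ s $ p = c * adjugate (mixed_columns A g) $ q $ p"
    by (simp add: mccoy_annihilator_def)
  also have "\<dots> = c * det (mixed_columns A (g(q := Inr p)))"
    by (simp only: adjugate_def vec_lambda_beta replace_column_mixed_columns_Inr)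
  finally show ?thesis .
qed

lemma exists_maximal_mixed_columns:
  fixes A :: "'a::comm_ring_1^'n::finite^'n"
  assumes "c \<noteq> 0"
  obtains g where "c * det (mixed_columns A g) \<noteq> 0"
    and "\<And>g'. inl_count g < inl_count g' \<Longrightarrow> c * det (mixed_columns A g') = 0"
proof -
  have "c * det (mixed_columns A Inr) \<noteq> 0"
    using assms by (simp add: mixed_columns_Inr)
  moreover have "inl_count g < Suc CARD('n)" for g :: "'n \<Rightarrow> 'n + 'n"
    using inl_count_le_card[of g] by simp
  ultimately obtain g where "c * det (mixed_columns A g) \<noteq> 0"
    and "\<forall>g'. c * det (mixed_columns A g') \<noteq> 0 \<longrightarrow> inl_count g' \<le> inl_count g"
    using Lattices_Big.ex_has_greatest_nat[of "\<lambda>g. c * det (mixed_columns A g) \<noteq> 0" Inr]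
    by blast
  then show ?thesis using that by (meson not_le)
qed

lemma inl_count_extend:
  fixes g :: "'n::finite \<Rightarrow> 'n + 'm"
  assumes "inl_count g < CARD('n)"
  obtains q r s where "g q = Inr r" and "\<And>i. g i \<noteq> Inl s"
    and "inl_count (g(q := Inl s)) = Suc (inl_count g)"
proof -
  have "{i. isl (g i)} \<noteq> UNIV"
    using assms by (auto simp: inl_count_def)
  then obtain q where "\<not> isl (g q)" by blast
  then obtain r where q: "g q = Inr r" by (cases "g q") auto
  have "card ((\<lambda>i. projl (g i)) ` {i. isl (g i)}) < CARD('n)"
    using card_image_le[of "{i. isl (g i)}" "\<lambda>i. projl (g i)"] assms by (simp add: inl_count_def)
  then obtain s where s: "s \<notin> (\<lambda>i. projl (g i)) ` {i. isl (g i)}"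
    by (metis UNIV_I less_irrefl subsetI subset_antisym)
  have "g i \<noteq> Inl s" for i
  proof
    assume "g i = Inl s"
    then have "s = projl (g i)" and "isl (g i)" by simp_all
    with s show False by blast
  qed
  moreover have "{i. isl ((g(q := Inl s)) i)} = insert q {i. isl (g i)}"
    by auto
  then have "inl_count (g(q := Inl s)) = Suc (inl_count g)"
    using q by (simp add: inl_count_def)
  ultimately show ?thesis using that q by blast
qed

theorem exists_two_sided_annihilator_multiple:
  fixes A :: "'a::comm_ring_1^'n::finite^'n"
  assumes "c \<noteq> 0" and "c * det A = 0"
  shows "\<exists>B. B \<noteq> 0 \<and> A ** B = 0 \<and> B ** A = 0 \<and> (\<forall>i j. c dvd B $ i $ j)"
proof -
  obtain g where nonzero: "c * det (mixed_columns A g) \<noteq> 0"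
    and maximal: "\<And>g'. inl_count g < inl_count g' \<Longrightarrow> c * det (mixed_columns A g') = 0"
    using exists_maximal_mixed_columns assms(1) by blast
  have "inl_count g < CARD('n)"
  proof (rule ccontr)
    assume "\<not> inl_count g < CARD('n)"
    then have "{i. isl (g i)} = UNIV"
      using inl_count_le_card[of g] by (intro card_subset_eq) (auto simp: inl_count_def)
    then have "det A dvd det (mixed_columns A g)"
      by (intro det_dvd_det_mixed_columns) blast
    then show False
      using assms(2) nonzero by (auto elim!: dvdE simp: mult.assoc[symmetric])
  qed
  then obtain q r s where q: "g q = Inr r" and s: "\<And>i. g i \<noteq> Inl s"
    and count: "inl_count (g(q := Inl s)) = Suc (inl_count g)"
    by (erule inl_count_extend)
  define B where "B = mccoy_annihilator c A (g(q := Inl s))"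
  have saturated: "c * det (mixed_columns A g') = 0"
    if "inl_count g' = inl_count (g(q := Inl s))" for g'
    using maximal that count by simp
  have unique: "(g(q := Inl s)) i = Inl s \<Longrightarrow> i = q" for i
    using s by (cases "i = q") auto
  have "B $ s $ r = c * det (mixed_columns A (g(q := Inl s, q := Inr r)))"
    unfolding B_def by (rule mccoy_annihilator_entry[OF _ unique]) simp
  also have "g(q := Inl s, q := Inr r) = g"
    using q by auto
  finally have "B $ s $ r = c * det (mixed_columns A g)" .
  then have "B \<noteq> 0" using nonzero by auto
  moreover have "A ** B = 0" "B ** A = 0"
    unfolding B_def using saturated
    by (simp_all add: mult_mccoy_annihilator mccoy_annihilator_mult)
  moreover have "c dvd B $ i $ j" for i j
    by (simp add: B_def mccoy_annihilator_def)
  ultimately show ?thesis by blast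
qed

lemma mult_eq_0_of_dvd_entries:
  fixes X Y :: "'a::comm_ring_1^'n::finite^'n"
  assumes "\<And>i j. c dvd X $ i $ j" and "\<And>i j. d dvd Y $ i $ j" and "c * d = 0"
  shows "X ** Y = 0"
proof -
  have "X $ i $ k * Y $ k $ j = 0" for i k j
    using assms(1)[of i k] assms(2)[of k j] assms(3)
    by (auto elim!: dvdE simp: algebra_simps)
  then show ?thesis by (simp add: vec_eq_iff matrix_matrix_mult_def)
qed

lemma walk_singleton [simp]: "walk E [x]"
  by (simp add: walk_def)

lemma walk_Cons_Cons: "walk E (x # y # zs) \<longleftrightarrow> E x y \<and> walk E (y # zs)"
  unfolding walk_def by (auto simp: less_Suc_eq_0_disj)

lemma walk_skip_repeats:
  assumes "walk (\<lambda>u v. u = v \<or> E u v) (x # xs)"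
  shows "\<exists>ys. walk E ys \<and> hd ys = x \<and> last ys = last (x # xs) \<and> length ys \<le> length (x # xs)"
  using assms
proof (induction xs arbitrary: x)
  case Nil
  then show ?case by (intro exI[of _ "[x]"]) simp
next
  case (Cons y zs)
  then obtain ys where ys: "walk E ys" "hd ys = y" "last ys = last (y # zs)"
    "length ys \<le> length (y # zs)"
    by (auto simp: walk_Cons_Cons)
  show ?case
  proof (cases "x = y")
    case True
    then show ?thesis using ys by (intro exI[of _ ys]) auto
  next
    case False
    then have "E x y" using Cons.prems by (simp add: walk_Cons_Cons)
    moreover have "ys = y # tl ys"
      using ys(1,2) by (cases ys) (auto simp: walk_def)
    ultimately have "walk E (x # ys)"
      using ys(1) by (metis walk_Cons_Cons)
    then show ?thesis using ys by (intro exI[of _ "x # ys"]) (auto simp: walk_def)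
  qed
qed

lemma graph_dist_le_walk:
  assumes "walk (\<lambda>u v. u = v \<or> E u v) xs"
  shows "graph_dist E (hd xs) (last xs) \<le> enat (length xs - 1)"
proof -
  obtain x xs' where xs: "xs = x # xs'"
    using assms by (cases xs) (auto simp: walk_def)
  then obtain ys where "walk E ys" "hd ys = hd xs" "last ys = last xs" "length ys \<le> length xs"
    using walk_skip_repeats assms by fastforce
  then have "graph_dist E (hd xs) (last xs) \<le> enat (length ys - 1)"
    unfolding graph_dist_def by (intro INF_lower) auto
  also have "\<dots> \<le> enat (length xs - 1)"
    using \<open>length ys \<le> length xs\<close> by simp
  finally show ?thesis .
qed

theorem lemma3:
  fixes A1 A2 :: "'a::comm_ring_1^'n::finite^'n" and c1 c2 :: 'a
  assumes "CARD('n) > 1"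
    and "orth_vertex A1" and "orth_vertex A2"
    and "c1 \<noteq> 0" and "c2 \<noteq> 0"
    and "c1 * det A1 = 0" and "c2 * det A2 = 0"
    and "c1 * c2 = 0"
  shows "graph_dist orth_adj A1 A2 \<le> 3"
proof -
  obtain B1 where B1: "B1 \<noteq> 0" "A1 ** B1 = 0" "B1 ** A1 = 0" "\<forall>i j. c1 dvd B1 $ i $ j"
    using exists_two_sided_annihilator_multiple[OF assms(4,6)] by blast
  obtain B2 where B2: "B2 \<noteq> 0" "A2 ** B2 = 0" "B2 ** A2 = 0" "\<forall>i j. c2 dvd B2 $ i $ j"
    using exists_two_sided_annihilator_multiple[OF assms(5,7)] by blast
  have "B1 ** B2 = 0" "B2 ** B1 = 0"
    using B1(4) B2(4) assms(8)
    by (metis mult_eq_0_of_dvd_entries mult.commute)+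
  moreover have "orth_vertex B1" "orth_vertex B2"
    using assms(2,3) B1 B2 unfolding orth_vertex_def two_sided_zd_def by blast+
  ultimately have "walk (\<lambda>u v. u = v \<or> orth_adj u v) [A1, B1, B2, A2]"
    using assms(2,3) B1 B2 by (auto simp: walk_Cons_Cons orth_adj_def)
  then show ?thesis
    using graph_dist_le_walk[of orth_adj "[A1, B1, B2, A2]"]
    by (simp add: numeral_eq_enat numeral_3_eq_3)
qed

end
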